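(* Let $a,b,c,d\in\mathbb{K}$ with $a\ne b$ and $c\ne d$, and let $\mathcal R_1=(1-a\tau)(1-b\tau)^{-1}$ and $\mathcal R_2=(1-c\tau)^{-1}(1-d\tau)$ in $\mathbb{K}(\tau)$. Then $\mathcal R_1=\mathcal R_2$ if and only if $c=b[1]\ln'(a-b)$ and $d=a[1]\ln'(a-b)$; equivalently, if and only if $a[1]=d/\ln'(c-d)$ and $b[1]=c/\ln'(c-d)$.
   Context: Fix $h\in\mathbb{C}^\times$. $\mathbb{K}=\mathbb{C}(x)$; for $f\in\mathbb{K}$, $f[i](x)=f(x-ih)$ and $\ln'(f)=f/f[1]$. $\mathbb{K}[\tau]$ is the ring of difference operators $\sum_ja_j\tau^j$ ($a_j\in\mathbb{K}$) with $\tau f=f[1]\tau$, and $\mathbb{K}(\tau)$ is its division ring of fractions. *)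

theory Defs
  imports "HOL-Computational_Algebra.Computational_Algebra"
begin

type_synonym K = "complex poly fract"

text \<open>Shift f[i](x) = f(x - i h), first on polynomials, then on rational functions.\<close>
definition pshift :: "complex \<Rightarrow> nat \<Rightarrow> complex poly \<Rightarrow> complex poly" where
  "pshift h i p = p \<circ>\<^sub>p [:- (of_nat i * h), 1:]"

definition kshift :: "complex \<Rightarrow> nat \<Rightarrow> K \<Rightarrow> K" where
  "kshift h i f = (SOME r. \<exists>p q. q \<noteq> 0 \<and> f = Fract p q \<and> r = Fract (pshift h i p) (pshift h i q))"

definition lnp :: "complex \<Rightarrow> K \<Rightarrow> K" where
  "lnp h f = f / kshift h 1 f"

text \<open>Skew formal power series K[[tau]] with tau f = f[1] tau: a series is the
  coefficient sequence of sum_n a_n tau^n.  The Ore division ring K(tau) embeds into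
  skew Laurent series, and the elements in question lie in K[[tau]].\<close>
type_synonym sser = "nat \<Rightarrow> K"

definition sone :: sser where "sone = (\<lambda>n. if n = 0 then 1 else 0)"
definition sconst :: "K \<Rightarrow> sser" where "sconst k = (\<lambda>n. if n = 0 then k else 0)"
definition stau :: sser where "stau = (\<lambda>n. if n = 1 then 1 else 0)"
definition ssub :: "sser \<Rightarrow> sser \<Rightarrow> sser" where "ssub f g = (\<lambda>n. f n - g n)"

definition smul :: "complex \<Rightarrow> sser \<Rightarrow> sser \<Rightarrow> sser" where
  "smul h f g = (\<lambda>n. \<Sum>i\<le>n. f i * kshift h i (g (n - i)))"

definition sinv :: "complex \<Rightarrow> sser \<Rightarrow> sser" where
  "sinv h f = (THE g. smul h f g = sone \<and> smul h g f = sone)"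

definition one_minus :: "complex \<Rightarrow> K \<Rightarrow> sser" where
  "one_minus h a = ssub sone (smul h (sconst a) stau)"

end

theory Submission
  imports Defs
begin

text \<open>
  Since \<open>(b\<tau>)\<^sup>n = b b[1] \<dots> b[n-1] \<tau>\<^sup>n\<close>, the inverse \<open>(1 - b\<tau>)\<^sup>-\<^sup>1\<close> is the series
  \<open>\<Sum>\<^sub>n G\<^sub>n(b) \<tau>\<^sup>n\<close> with \<open>G\<^sub>n(b) = b b[1] \<dots> b[n-1]\<close>. Both \<open>R\<^sub>1\<close> and \<open>R\<^sub>2\<close> have constant
  term 1, and their coefficients of \<open>\<tau>\<^sup>m\<^sup>+\<^sup>1\<close> are \<open>(b - a) G\<^sub>m(b)[1]\<close> and \<open>G\<^sub>m(c) (c - d)[m]\<close>.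
  For \<open>m = 0, 1\<close> equality of these says \<open>c - d = b - a\<close> and \<open>(b - a) b[1] = c (b - a)[1]\<close>;
  conversely, the \<open>m\<close>-th shift of the second equation is exactly the factor by which
  the coefficients grow from \<open>m\<close> to \<open>m + 1\<close>, so these two equations imply all others.
  Solving them for \<open>c, d\<close>, respectively for \<open>a[1], b[1]\<close>, gives the two forms.
\<close>

lemma pshift_eq_0_iff [simp]: "pshift h i p = 0 \<longleftrightarrow> p = 0"
  by (auto simp: pshift_def pcompose_eq_0_iff)

lemma pshift_mult [simp]: "pshift h i (p * q) = pshift h i p * pshift h i q"
  by (simp add: pshift_def pcompose_mult)

lemma pshift_diff [simp]: "pshift h i (p - q) = pshift h i p - pshift h i q"
  by (simp add: pshift_def pcompose_diff)

lemma pshift_uminus [simp]: "pshift h i (- p) = - pshift h i p"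
  by (simp add: pshift_def pcompose_uminus)

lemma pshift_1 [simp]: "pshift h i 1 = 1"
  by (simp add: pshift_def pcompose_1)

lemma pshift_by_0 [simp]: "pshift h 0 p = p"
  by (simp add: pshift_def)

lemma pshift_pshift: "pshift h i (pshift h j p) = pshift h (i + j) p"
  by (simp add: pshift_def pcompose_assoc[symmetric] pcompose_pCons algebra_simps)

lemma kshift_Fract:
  assumes "q \<noteq> 0"
  shows "kshift h i (Fract p q) = Fract (pshift h i p) (pshift h i q)"
  unfolding kshift_def
proof (rule someI2)
  show "\<exists>p' q'. q' \<noteq> 0 \<and> Fract p q = Fract p' q' \<and>
      Fract (pshift h i p) (pshift h i q) = Fract (pshift h i p') (pshift h i q')"
    using assms by blast
next
  fix r
  assume "\<exists>p' q'. q' \<noteq> 0 \<and> Fract p q = Fract p' q' \<and> r = Fract (pshift h i p') (pshift h i q')"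
  then obtain p' q' where "q' \<noteq> 0" "Fract p q = Fract p' q'"
    and r: "r = Fract (pshift h i p') (pshift h i q')"
    by blast
  with assms have "pshift h i (p * q') = pshift h i (p' * q)"
    by (simp add: eq_fract)
  with assms \<open>q' \<noteq> 0\<close> show "r = Fract (pshift h i p) (pshift h i q)"
    by (simp add: r eq_fract)
qed

lemma kshift_mult: "kshift h i (x * y) = kshift h i x * kshift h i y"
  by (cases x; cases y) (simp add: kshift_Fract)

lemma kshift_diff: "kshift h i (x - y) = kshift h i x - kshift h i y"
  by (cases x; cases y) (simp add: kshift_Fract)

lemma kshift_uminus: "kshift h i (- x) = - kshift h i x"
  by (cases x) (simp add: kshift_Fract)

lemma kshift_1 [simp]: "kshift h i 1 = 1"
  by (simp add: One_fract_def kshift_Fract)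

lemma kshift_eq_0_iff [simp]: "kshift h i x = 0 \<longleftrightarrow> x = 0"
  by (cases x) (auto simp: kshift_Fract eq_fract Zero_fract_def)

lemma kshift_inject: "kshift h i x = kshift h i y \<longleftrightarrow> x = y"
  using kshift_eq_0_iff[of h i "x - y"] by (simp add: kshift_diff)

lemma kshift_prod: "kshift h i (\<Prod>k\<in>A. f k) = (\<Prod>k\<in>A. kshift h i (f k))"
  by (induction A rule: infinite_finite_induct) (auto simp: kshift_mult)

lemma kshift_by_0 [simp]: "kshift h 0 x = x"
  by (cases x) (simp add: kshift_Fract)

lemma kshift_kshift: "kshift h i (kshift h j x) = kshift h (i + j) x"
  by (cases x) (simp add: kshift_Fract pshift_pshift)

lemma lnp_uminus: "lnp h (- x) = lnp h x"
  by (simp add: lnp_def kshift_uminus)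

lemma one_minus_coeff:
  "one_minus h a n = (if n = 0 then 1 else if n = 1 then - a else 0)"
proof -
  have "smul h (sconst a) stau n = (if n = 1 then a else 0)"
    by (cases n) (simp_all add: smul_def sconst_def stau_def sum.atMost_Suc_shift del: sum.atMost_Suc)
  then show ?thesis
    by (simp add: one_minus_def ssub_def sone_def)
qed

lemma sum_atMost_two_nonzero:
  fixes f :: "nat \<Rightarrow> 'a::comm_monoid_add"
  assumes "j \<le> n" "k \<le> n" "j \<noteq> k" "\<And>i. i \<le> n \<Longrightarrow> i \<noteq> j \<Longrightarrow> i \<noteq> k \<Longrightarrow> f i = 0"
  shows "(\<Sum>i\<le>n. f i) = f j + f k"
proof -
  have "(\<Sum>i\<le>n. f i) = (\<Sum>i\<in>{j, k}. f i)"
    by (rule sum.mono_neutral_right) (use assms in auto)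
  with assms show ?thesis
    by simp
qed

lemma smul_one_minus_left_0: "smul h (one_minus h a) g 0 = g 0"
  by (simp add: smul_def one_minus_coeff)

lemma smul_one_minus_left_Suc:
  "smul h (one_minus h a) g (Suc m) = g (Suc m) - a * kshift h 1 (g m)"
proof -
  have "smul h (one_minus h a) g (Suc m) =
      one_minus h a 0 * kshift h 0 (g (Suc m)) + one_minus h a 1 * kshift h 1 (g m)"
    unfolding smul_def by (subst sum_atMost_two_nonzero[of 0 _ 1]) (auto simp: one_minus_coeff)
  then show ?thesis
    by (simp add: one_minus_coeff)
qed

lemma smul_one_minus_right_0: "smul h g (one_minus h d) 0 = g 0"
  by (simp add: smul_def one_minus_coeff)

lemma smul_one_minus_right_Suc:
  "smul h g (one_minus h d) (Suc m) = g (Suc m) - g m * kshift h m d"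
proof -
  have "smul h g (one_minus h d) (Suc m) =
      g (Suc m) * kshift h (Suc m) (one_minus h d 0) + g m * kshift h m (one_minus h d 1)"
    unfolding smul_def by (subst sum_atMost_two_nonzero[of "Suc m" _ m]) (auto simp: one_minus_coeff)
  then show ?thesis
    by (simp add: one_minus_coeff kshift_uminus)
qed

text \<open>\<open>sgeom h b n\<close> is \<open>G\<^sub>n(b)\<close>, the coefficient of \<open>\<tau>\<^sup>n\<close> in \<open>\<Sum>\<^sub>n (b\<tau>)\<^sup>n\<close>.\<close>
definition sgeom :: "complex \<Rightarrow> K \<Rightarrow> sser" where
  "sgeom h b n = (\<Prod>k<n. kshift h k b)"

lemma sgeom_0 [simp]: "sgeom h b 0 = 1"
  by (simp add: sgeom_def)

lemma sgeom_Suc_left: "sgeom h b (Suc m) = b * kshift h 1 (sgeom h b m)"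
  unfolding sgeom_def prod.lessThan_Suc_shift by (simp add: kshift_prod kshift_kshift)

lemma sgeom_Suc_right: "sgeom h b (Suc m) = sgeom h b m * kshift h m b"
  by (simp add: sgeom_def)

lemma sinv_one_minus: "sinv h (one_minus h b) = sgeom h b"
  unfolding sinv_def
proof (rule the_equality)
  show "smul h (one_minus h b) (sgeom h b) = sone \<and> smul h (sgeom h b) (one_minus h b) = sone"
  proof (intro conjI ext)
    show "smul h (one_minus h b) (sgeom h b) n = sone n" for n
      by (cases n) (simp_all add: smul_one_minus_left_0 smul_one_minus_left_Suc sone_def sgeom_Suc_left)
    show "smul h (sgeom h b) (one_minus h b) n = sone n" for n
      by (cases n) (simp_all add: smul_one_minus_right_0 smul_one_minus_right_Suc sone_def sgeom_Suc_right)
  qed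
next
  fix g
  assume "smul h (one_minus h b) g = sone \<and> smul h g (one_minus h b) = sone"
  then have left_inverse: "smul h (one_minus h b) g n = sone n" for n
    by simp
  show "g = sgeom h b"
  proof
    fix n
    show "g n = sgeom h b n"
    proof (induction n)
      case 0
      show ?case
        using left_inverse[of 0] by (simp add: smul_one_minus_left_0 sone_def)
    next
      case (Suc n)
      show ?case
        using left_inverse[of "Suc n"] by (simp add: smul_one_minus_left_Suc sone_def sgeom_Suc_left Suc.IH)
    qed
  qed
qed

lemma one_minus_times_sinv_eq_sinv_times_one_minus_iff:
  "smul h (one_minus h a) (sinv h (one_minus h b)) = smul h (sinv h (one_minus h c)) (one_minus h d)
   \<longleftrightarrow> (\<forall>m. (b - a) * kshift h 1 (sgeom h b m) = sgeom h c m * kshift h m (c - d))"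
proof -
  have coeff_left: "smul h (one_minus h a) (sgeom h b) (Suc m) = (b - a) * kshift h 1 (sgeom h b m)"
    for m by (simp add: smul_one_minus_left_Suc sgeom_Suc_left algebra_simps)
  have coeff_right: "smul h (sgeom h c) (one_minus h d) (Suc m) = sgeom h c m * kshift h m (c - d)"
    for m by (simp add: smul_one_minus_right_Suc sgeom_Suc_right kshift_diff algebra_simps)
  have "smul h (one_minus h a) (sgeom h b) = smul h (sgeom h c) (one_minus h d) \<longleftrightarrow>
      (\<forall>m. smul h (one_minus h a) (sgeom h b) (Suc m) = smul h (sgeom h c) (one_minus h d) (Suc m))"
    unfolding fun_eq_iff by (metis not0_implies_Suc smul_one_minus_left_0 smul_one_minus_right_0 sgeom_0)
  then show ?thesis
    by (simp add: sinv_one_minus coeff_left coeff_right)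
qed

lemma coeff_equations_iff_first_two:
  "(\<forall>m. (b - a) * kshift h 1 (sgeom h b m) = sgeom h c m * kshift h m (c - d))
   \<longleftrightarrow> c - d = b - a \<and> (b - a) * kshift h 1 b = c * kshift h 1 (b - a)"
proof
  assume "\<forall>m. (b - a) * kshift h 1 (sgeom h b m) = sgeom h c m * kshift h m (c - d)"
  from this[rule_format, of 0] this[rule_format, of 1]
  show "c - d = b - a \<and> (b - a) * kshift h 1 b = c * kshift h 1 (b - a)"
    by (simp add: sgeom_def)
next
  define e where "e = b - a"
  assume "c - d = b - a \<and> (b - a) * kshift h 1 b = c * kshift h 1 (b - a)"
  then have cd: "c - d = e" and first: "e * kshift h 1 b = c * kshift h 1 e"
    by (simp_all add: e_def)
  have shifted_first: "kshift h m e * kshift h (Suc m) b = kshift h m c * kshift h (Suc m) e" for m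
    using arg_cong[OF first, of "kshift h m"] by (simp add: kshift_mult kshift_kshift mult.commute)
  show "\<forall>m. (b - a) * kshift h 1 (sgeom h b m) = sgeom h c m * kshift h m (c - d)"
  proof
    fix m
    show "(b - a) * kshift h 1 (sgeom h b m) = sgeom h c m * kshift h m (c - d)"
      unfolding cd e_def[symmetric]
    proof (induction m)
      case 0
      then show ?case by simp
    next
      case (Suc m)
      have "e * kshift h 1 (sgeom h b (Suc m)) = e * kshift h 1 (sgeom h b m) * kshift h (Suc m) b"
        by (simp add: sgeom_Suc_right kshift_mult kshift_kshift)
      also have "\<dots> = sgeom h c m * (kshift h m e * kshift h (Suc m) b)"
        by (simp only: Suc.IH mult.assoc)
      also have "\<dots> = sgeom h c (Suc m) * kshift h (Suc m) e"
        by (simp add: shifted_first sgeom_Suc_right)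
      finally show ?case .
    qed
  qed
qed

lemma first_two_iff_lnp_form:
  assumes "a \<noteq> b"
  shows "(c - d = b - a \<and> (b - a) * kshift h 1 b = c * kshift h 1 (b - a))
     \<longleftrightarrow> c = kshift h 1 b * lnp h (a - b) \<and> d = kshift h 1 a * lnp h (a - b)"
proof -
  define e where "e = b - a"
  define E where "E = kshift h 1 e"
  define B where "B = kshift h 1 b"
  have "E \<noteq> 0"
    using assms by (simp add: e_def E_def)
  have lnp: "lnp h (a - b) = e / E"
    using lnp_uminus[of h e] by (simp add: e_def E_def lnp_def)
  have "kshift h 1 a = B - E"
    by (simp add: B_def E_def e_def kshift_diff)
  have shift_a: "kshift h 1 a * lnp h (a - b) = B * lnp h (a - b) - e"
    unfolding lnp \<open>kshift h 1 a = B - E\<close> using \<open>E \<noteq> 0\<close> by (simp add: field_simps)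
  from \<open>E \<noteq> 0\<close> have "e * B = c * E \<longleftrightarrow> c = B * lnp h (a - b)"
    by (auto simp: lnp field_simps)
  then show ?thesis
    unfolding e_def[symmetric] E_def[symmetric] B_def[symmetric] shift_a
    by (auto simp: algebra_simps)
qed

lemma first_two_iff_shifted_form:
  assumes "c \<noteq> d"
  shows "(c - d = b - a \<and> (b - a) * kshift h 1 b = c * kshift h 1 (b - a))
     \<longleftrightarrow> kshift h 1 a = d / lnp h (c - d) \<and> kshift h 1 b = c / lnp h (c - d)"
proof -
  define f where "f = c - d"
  define F where "F = kshift h 1 f"
  define B where "B = kshift h 1 b"
  have "f \<noteq> 0" "F \<noteq> 0"
    using assms by (simp_all add: f_def F_def)
  have lnp: "lnp h (c - d) = f / F"
    by (simp add: f_def F_def lnp_def)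
  have "c - d = b - a \<longleftrightarrow> kshift h 1 a = B - F"
    by (auto simp: B_def f_def F_def kshift_diff[symmetric] kshift_inject)
  then have first_two: "(c - d = b - a \<and> (b - a) * B = c * kshift h 1 (b - a))
      \<longleftrightarrow> kshift h 1 a = B - F \<and> f * B = c * F"
    by (auto simp: f_def F_def)
  have "c / lnp h (c - d) - F = d / lnp h (c - d)"
    using \<open>f \<noteq> 0\<close> \<open>F \<noteq> 0\<close> by (simp add: lnp f_def field_simps)
  moreover have "f * B = c * F \<longleftrightarrow> B = c / lnp h (c - d)"
    using \<open>f \<noteq> 0\<close> \<open>F \<noteq> 0\<close> by (auto simp: lnp field_simps)
  ultimately show ?thesis
    unfolding B_def[symmetric] first_two by auto
qed

theorem lemma2p2:
  fixes h :: complex and a b c d :: K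
  assumes "h \<noteq> 0" and "a \<noteq> b" and "c \<noteq> d"
  defines "R1 \<equiv> smul h (one_minus h a) (sinv h (one_minus h b))"
      and "R2 \<equiv> smul h (sinv h (one_minus h c)) (one_minus h d)"
  shows "(R1 = R2 \<longleftrightarrow> c = kshift h 1 b * lnp h (a - b) \<and> d = kshift h 1 a * lnp h (a - b))
       \<and> (R1 = R2 \<longleftrightarrow> kshift h 1 a = d / lnp h (c - d) \<and> kshift h 1 b = c / lnp h (c - d))"
proof -
  have "R1 = R2 \<longleftrightarrow> c - d = b - a \<and> (b - a) * kshift h 1 b = c * kshift h 1 (b - a)"
    unfolding R1_def R2_def one_minus_times_sinv_eq_sinv_times_one_minus_iff
    by (rule coeff_equations_iff_first_two)
  with first_two_iff_lnp_form[OF \<open>a \<noteq> b\<close>] first_two_iff_shifted_form[OF \<open>c \<noteq> d\<close>]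
  show ?thesis
    by blast
qed

end
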